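(* Let $\mathbf{X}=(X_n)_{n\ge0}$ be a second-order stationary process whose covariance satisfies $|\sigma_X(h)|\le c\,h^{-\alpha}$ for all $h\ge1$, for some $c>0$ and $0<\alpha<1$. Let $(T_n)_{n\ge0}$ be a random walk independent of $\mathbf{X}$ with $T_0=0$ and i.i.d. increments with law $S$ on $\{1,2,\dots\}$, and let $Y_n=X_{T_n}$ with covariance $\sigma_Y$. If for some $\beta\in(0,1)$ $$\liminf_{x\to\infty}x^{\beta}P(T_1>x)>0,$$ then there is a constant $C$ such that $|\sigma_Y(h)|\le C\,h^{-\alpha/\beta}$ for all $h\ge1$. *)

theory Defs
  imports "HOL-Probability.Probability"
begin

definition cov :: "'a measure \<Rightarrow> ('a \<Rightarrow> real) \<Rightarrow> ('a \<Rightarrow> real) \<Rightarrow> real" where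
  "cov M U V = (\<integral>\<omega>. (U \<omega> - (\<integral>\<omega>'. U \<omega>' \<partial>M)) * (V \<omega> - (\<integral>\<omega>'. V \<omega>' \<partial>M)) \<partial>M)"

end

theory Submission
  imports Defs
begin

text \<open>
  Conditioning on the walk, which is independent of X, turns Cov(Y_n, Y_(n+h)) into
  E \<sigma>_X(D) with D = T_(n+h) - T_n, a sum of h i.i.d. increments each \<ge> 1; so its modulus is at
  most c E D^(-\<alpha>). The tail assumption gives P(T_1 > x) \<ge> \<kappa> x^(-\<beta>) for x \<ge> 1, hence by
  independence P(D \<le> x) \<le> exp(-h \<kappa> x^(-\<beta>)). Splitting E D^(-\<alpha>) over the dyadic shells
  a 2^(-k-1) < D \<le> a 2^(-k) with a = h^(1/\<beta>), shell k contributes at most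
  h^(-\<alpha>/\<beta>) 2^((k+1)\<alpha>) exp(-\<kappa> 2^(k\<beta>)), which is summable in k.
\<close>

lemma powr_neg_le_1:
  fixes x b :: real
  assumes "1 \<le> x" "0 \<le> b"
  shows "x powr (-b) \<le> 1"
  using ge_one_powr_ge_zero[OF assms] by (simp add: powr_minus inverse_le_1_iff)

lemma abs_mult_le_sum_squares: "\<bar>(u::real) * v\<bar> \<le> u\<^sup>2 + v\<^sup>2"
proof -
  have "2 * \<bar>u\<bar> * \<bar>v\<bar> \<le> \<bar>u\<bar>\<^sup>2 + \<bar>v\<bar>\<^sup>2"
    using sum_squares_bound[of "\<bar>u\<bar>" "\<bar>v\<bar>"] by simp
  moreover have "0 \<le> \<bar>u\<bar> * \<bar>v\<bar>" by simp
  ultimately show ?thesis unfolding abs_mult power2_abs by linarith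
qed

lemma abs_le_1_plus_square: "\<bar>(u::real)\<bar> \<le> 1 + u\<^sup>2"
proof -
  have "0 \<le> (\<bar>u\<bar> - 1)\<^sup>2" by simp
  then show ?thesis by (simp add: power2_eq_square algebra_simps)
qed

lemma exp_neg_le_power:
  fixes y :: real
  assumes "0 < y" "0 < m"
  shows "exp (-y) \<le> (real m / y) ^ m"
proof -
  have "(y / real m) ^ m \<le> exp (y / real m) ^ m"
  proof (rule power_mono)
    show "y / real m \<le> exp (y / real m)"
      using exp_ge_add_one_self[of "y / real m"] by linarith
  qed (use assms in auto)
  also have "\<dots> = exp y"
    using assms by (simp flip: exp_of_nat_mult)
  finally have "1 / exp y \<le> 1 / (y / real m) ^ m"
    using assms by (intro divide_left_mono) auto
  then show ?thesis
    by (simp add: exp_minus inverse_eq_divide power_divide)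
qed

lemma summable_dyadic_powr_exp:
  fixes \<kappa> \<alpha> \<beta> :: real
  assumes \<kappa>: "0 < \<kappa>" and \<beta>: "0 < \<beta>"
  shows "summable (\<lambda>k. 2 powr ((real k + 1) * \<alpha>) * exp (-(\<kappa> * 2 powr (real k * \<beta>))))"
proof (rule summable_comparison_test')
  \<comment> \<open>By exp(-y) \<le> (m/y)^m with m\<beta> \<ge> \<alpha> + 1, the k-th term is O(2^-k).\<close>
  define m where "m = nat \<lceil>(\<alpha> + 1) / \<beta>\<rceil> + 1"
  have "0 < m" by (simp add: m_def)
  have "(\<alpha> + 1) / \<beta> \<le> real m" unfolding m_def by linarith
  then have m\<beta>: "\<alpha> + 1 \<le> real m * \<beta>" using \<beta> by (simp add: field_simps)
  define A where "A = 2 powr \<alpha> * (real m / \<kappa>) ^ m"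
  show "summable (\<lambda>k. A * (1/2) ^ k)" by simp
  show "norm (2 powr ((real k + 1) * \<alpha>) * exp (-(\<kappa> * 2 powr (real k * \<beta>)))) \<le> A * (1/2) ^ k"
    for k
  proof -
    have "exp (-(\<kappa> * 2 powr (real k * \<beta>))) \<le> (real m / (\<kappa> * 2 powr (real k * \<beta>))) ^ m"
      using \<kappa> \<open>0 < m\<close> by (intro exp_neg_le_power) auto
    also have "\<dots> = (real m / \<kappa>) ^ m / 2 powr (real k * \<beta> * real m)"
      by (simp add: power_divide power_mult_distrib powr_realpow[symmetric] powr_powr mult_ac
          flip: powr_power)
    finally have "2 powr ((real k + 1) * \<alpha>) * exp (-(\<kappa> * 2 powr (real k * \<beta>)))
        \<le> 2 powr ((real k + 1) * \<alpha>) * ((real m / \<kappa>) ^ m / 2 powr (real k * \<beta> * real m))"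
      by (intro mult_left_mono) auto
    also have "\<dots> = A * 2 powr (real k * (\<alpha> - \<beta> * real m))"
    proof -
      have "2 powr ((real k + 1) * \<alpha>) / 2 powr (real k * \<beta> * real m)
          = 2 powr \<alpha> * 2 powr (real k * (\<alpha> - \<beta> * real m))"
        by (simp add: powr_diff[symmetric] powr_add[symmetric] algebra_simps)
      then show ?thesis
        unfolding A_def times_divide_eq_right[symmetric] divide_inverse by (simp add: mult_ac)
    qed
    also have "\<dots> \<le> A * 2 powr (- real k)"
    proof -
      have "real k * (\<alpha> - \<beta> * real m) \<le> real k * (-1)"
        using m\<beta> by (intro mult_left_mono) (auto simp: algebra_simps)
      then show ?thesis using \<kappa> unfolding A_def by (intro mult_left_mono powr_mono) auto
    qed
    also have "\<dots> = A * (1/2) ^ k"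
      by (simp add: powr_minus powr_realpow power_one_over field_simps)
    finally show ?thesis by simp
  qed
qed

lemma powr_neg_le_dyadic_sum:
  fixes a d \<alpha> :: real
  assumes a: "0 < a" and \<alpha>: "0 < \<alpha>" and d: "a / 2^K < d"
  shows "d powr (-\<alpha>) \<le> a powr (-\<alpha>)
    + (\<Sum>k<K. (a / 2^(k+1)) powr (-\<alpha>) * (if d \<le> a / 2^k then 1 else 0))"
  using d
proof (induction K)
  case 0
  then show ?case using a \<alpha> by (simp add: powr_mono2')
next
  case (Suc K)
  show ?case
  proof (cases "a / 2^K < d")
    case True
    then show ?thesis using Suc.IH by simp
  next
    case False
    have "d powr (-\<alpha>) \<le> (a / 2^(K+1)) powr (-\<alpha>)"
      using Suc.prems a \<alpha> by (intro powr_mono2') auto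
    moreover have "0 \<le> (\<Sum>k<K. (a / 2^(k+1)) powr (-\<alpha>) * (if d \<le> a / 2^k then 1 else (0::real)))"
      by (intro sum_nonneg) auto
    moreover have "(\<Sum>k<Suc K. (a / 2^(k+1)) powr (-\<alpha>) * (if d \<le> a / 2^k then 1 else (0::real)))
        = (\<Sum>k<K. (a / 2^(k+1)) powr (-\<alpha>) * (if d \<le> a / 2^k then 1 else 0))
          + (a / 2^(K+1)) powr (-\<alpha>)"
      using False by simp
    ultimately show ?thesis
      using powr_ge_zero[of a "-\<alpha>"] by linarith
  qed
qed

lemma (in prob_space) indep_var_fubini:
  fixes G :: "'b \<times> 'b \<Rightarrow> real"
  assumes ind: "indep_var SX X SZ Z"
    and G: "G \<in> borel_measurable (SX \<Otimes>\<^sub>M SZ)"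
    and bounded: "\<And>z. z \<in> space SZ \<Longrightarrow> (\<integral>\<^sup>+x. ennreal (norm (G (x, z))) \<partial>distr M SX X) \<le> ennreal K"
  shows "integrable M (\<lambda>\<omega>. G (X \<omega>, Z \<omega>))"
    and "(\<integral>\<omega>. G (X \<omega>, Z \<omega>) \<partial>M) = (\<integral>z. (\<integral>x. G (x, z) \<partial>distr M SX X) \<partial>distr M SZ Z)"
proof -
  have X: "X \<in> measurable M SX" and Z: "Z \<in> measurable M SZ"
    and joint: "distr M SX X \<Otimes>\<^sub>M distr M SZ Z = distr M (SX \<Otimes>\<^sub>M SZ) (\<lambda>\<omega>. (X \<omega>, Z \<omega>))"
    using ind unfolding indep_var_distribution_eq by auto
  interpret PX: prob_space "distr M SX X" by (rule prob_space_distr[OF X])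
  interpret PZ: prob_space "distr M SZ Z" by (rule prob_space_distr[OF Z])
  interpret XZ: pair_prob_space "distr M SX X" "distr M SZ Z" by unfold_locales
  have XZ: "(\<lambda>\<omega>. (X \<omega>, Z \<omega>)) \<in> measurable M (SX \<Otimes>\<^sub>M SZ)"
    using X Z by measurable
  have "sets (distr M SX X \<Otimes>\<^sub>M distr M SZ Z) = sets (SX \<Otimes>\<^sub>M SZ)"
    by (intro sets_pair_measure_cong) auto
  then have G': "G \<in> borel_measurable (distr M SX X \<Otimes>\<^sub>M distr M SZ Z)"
    using G by (subst measurable_cong_sets[OF _ refl])
  have "(\<integral>\<^sup>+p. ennreal (norm (G p)) \<partial>(distr M SX X \<Otimes>\<^sub>M distr M SZ Z))
      = (\<integral>\<^sup>+z. (\<integral>\<^sup>+x. ennreal (norm (G (x, z))) \<partial>distr M SX X) \<partial>distr M SZ Z)"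
    by (rule XZ.nn_integral_snd[symmetric]) (use G' in measurable)
  also have "\<dots> \<le> (\<integral>\<^sup>+z. ennreal K \<partial>distr M SZ Z)"
    by (intro nn_integral_mono) (use bounded in auto)
  also have "\<dots> < \<infinity>"
    using PZ.emeasure_space_1 by simp
  finally have integrable_G: "integrable (distr M SX X \<Otimes>\<^sub>M distr M SZ Z) G"
    using G' by (simp add: integrable_iff_bounded)
  then show "integrable M (\<lambda>\<omega>. G (X \<omega>, Z \<omega>))"
    unfolding joint by (subst (asm) integrable_distr_eq[OF XZ G])
  have "(\<integral>\<omega>. G (X \<omega>, Z \<omega>) \<partial>M) = integral\<^sup>L (distr M SX X \<Otimes>\<^sub>M distr M SZ Z) G"
    unfolding joint by (rule integral_distr[OF XZ G, symmetric])
  also have "\<dots> = integral\<^sup>L (distr M SX X \<Otimes>\<^sub>M distr M SZ Z) (\<lambda>(x, z). G (x, z))"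
    by simp
  also have "\<dots> = (\<integral>z. (\<integral>x. G (x, z) \<partial>distr M SX X) \<partial>distr M SZ Z)"
    by (rule XZ.integral_snd[symmetric]) (use integrable_G in simp)
  finally show "(\<integral>\<omega>. G (X \<omega>, Z \<omega>) \<partial>M) = (\<integral>z. (\<integral>x. G (x, z) \<partial>distr M SX X) \<partial>distr M SZ Z)" .
qed

lemma (in prob_space) integral_indep_random_index:
  fixes F :: "'i::countable \<Rightarrow> 'b \<Rightarrow> real" and \<tau> :: "'b \<Rightarrow> 'i"
  assumes ind: "indep_var SX X SZ Z"
    and \<tau>[measurable]: "\<tau> \<in> measurable SZ (count_space UNIV)"
    and F[measurable]: "\<And>i. F i \<in> borel_measurable SX"
    and integrable_F: "\<And>i. integrable M (\<lambda>\<omega>. F i (X \<omega>))"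
    and bounded_F: "\<And>i. (\<integral>\<omega>. \<bar>F i (X \<omega>)\<bar> \<partial>M) \<le> K"
  shows "integrable M (\<lambda>\<omega>. F (\<tau> (Z \<omega>)) (X \<omega>))"
    and "(\<integral>\<omega>. F (\<tau> (Z \<omega>)) (X \<omega>) \<partial>M) = (\<integral>\<omega>. (\<integral>\<omega>'. F (\<tau> (Z \<omega>)) (X \<omega>') \<partial>M) \<partial>M)"
proof -
  have X[measurable]: "X \<in> measurable M SX" and Z[measurable]: "Z \<in> measurable M SZ"
    using indep_var_rv1[OF ind] indep_var_rv2[OF ind] .
  define G where "G p = F (\<tau> (snd p)) (fst p)" for p
  have G: "G \<in> borel_measurable (SX \<Otimes>\<^sub>M SZ)"
    unfolding G_def
    by (rule measurable_compose_countable[where f = "\<lambda>i p. F i (fst p)"]) measurable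
  have "(\<integral>\<^sup>+x. ennreal (norm (G (x, z))) \<partial>distr M SX X) \<le> ennreal K" for z
  proof -
    have "(\<integral>\<^sup>+x. ennreal (norm (G (x, z))) \<partial>distr M SX X) = (\<integral>\<^sup>+\<omega>. ennreal \<bar>F (\<tau> z) (X \<omega>)\<bar> \<partial>M)"
      unfolding G_def by (subst nn_integral_distr) auto
    also have "\<dots> = ennreal (\<integral>\<omega>. \<bar>F (\<tau> z) (X \<omega>)\<bar> \<partial>M)"
      by (rule nn_integral_eq_integral) (use integrable_F in auto)
    also have "\<dots> \<le> ennreal K"
      by (rule ennreal_leI bounded_F)+
    finally show ?thesis .
  qed
  note fubini = indep_var_fubini[OF ind G this]
  show "integrable M (\<lambda>\<omega>. F (\<tau> (Z \<omega>)) (X \<omega>))"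
    using fubini(1) by (simp add: G_def)
  have inner: "(\<integral>x. F i x \<partial>distr M SX X) = (\<integral>\<omega>. F i (X \<omega>) \<partial>M)" for i
    by (rule integral_distr) measurable
  have "(\<integral>\<omega>. F (\<tau> (Z \<omega>)) (X \<omega>) \<partial>M) = (\<integral>z. (\<integral>x. F (\<tau> z) x \<partial>distr M SX X) \<partial>distr M SZ Z)"
    using fubini(2) by (simp add: G_def)
  also have "\<dots> = (\<integral>\<omega>. (\<integral>x. F (\<tau> (Z \<omega>)) x \<partial>distr M SX X) \<partial>M)"
    by (rule integral_distr[OF Z], rule measurable_compose_countable[OF _ \<tau>]) simp
  finally show "(\<integral>\<omega>. F (\<tau> (Z \<omega>)) (X \<omega>) \<partial>M) = (\<integral>\<omega>. (\<integral>\<omega>'. F (\<tau> (Z \<omega>)) (X \<omega>') \<partial>M) \<partial>M)"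
    by (simp add: inner)
qed

locale second_order_stationary = prob_space +
  fixes X :: "nat \<Rightarrow> 'a \<Rightarrow> real" and \<mu> :: real and \<sigma> :: "nat \<Rightarrow> real"
  assumes measurable_X[measurable]: "\<And>n. X n \<in> borel_measurable M"
    and integrable_square_X: "\<And>n. integrable M (\<lambda>\<omega>. (X n \<omega>)\<^sup>2)"
    and integral_X: "\<And>n. (\<integral>\<omega>. X n \<omega> \<partial>M) = \<mu>"
    and cov_X: "\<And>m h. cov M (X m) (X (m + h)) = \<sigma> h"
begin

lemma integrable_X: "integrable M (X n)"
  by (rule square_integrable_imp_integrable[OF measurable_X integrable_square_X])

lemma integrable_centered_square: "integrable M (\<lambda>\<omega>. (X n \<omega> - \<mu>)\<^sup>2)"
proof -
  have "(\<lambda>\<omega>. (X n \<omega> - \<mu>)\<^sup>2) = (\<lambda>\<omega>. (X n \<omega>)\<^sup>2 - 2 * \<mu> * X n \<omega> + \<mu>\<^sup>2)"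
    by (auto simp: power2_diff algebra_simps)
  then show ?thesis
    using integrable_X[of n] integrable_square_X[of n] by simp
qed

lemma integral_centered_square: "(\<integral>\<omega>. (X n \<omega> - \<mu>)\<^sup>2 \<partial>M) = \<sigma> 0"
  using cov_X[of n 0] by (simp add: cov_def integral_X power2_eq_square)

lemma integrable_centered_product: "integrable M (\<lambda>\<omega>. (X m \<omega> - \<mu>) * (X n \<omega> - \<mu>))"
  by (rule Bochner_Integration.integrable_bound[where f = "\<lambda>\<omega>. (X m \<omega> - \<mu>)\<^sup>2 + (X n \<omega> - \<mu>)\<^sup>2"])
    (use integrable_centered_square abs_mult_le_sum_squares in auto)

lemma integral_abs_X_le: "(\<integral>\<omega>. \<bar>X n \<omega>\<bar> \<partial>M) \<le> 1 + \<bar>\<mu>\<bar> + \<sigma> 0"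
proof -
  have "(\<integral>\<omega>. \<bar>X n \<omega>\<bar> \<partial>M) \<le> (\<integral>\<omega>. \<bar>\<mu>\<bar> + (1 + (X n \<omega> - \<mu>)\<^sup>2) \<partial>M)"
  proof (rule integral_mono)
    show "\<bar>X n \<omega>\<bar> \<le> \<bar>\<mu>\<bar> + (1 + (X n \<omega> - \<mu>)\<^sup>2)" for \<omega>
      using abs_le_1_plus_square[of "X n \<omega> - \<mu>"] by linarith
  qed (use integrable_X integrable_centered_square in auto)
  also have "\<dots> = 1 + \<bar>\<mu>\<bar> + \<sigma> 0"
    using integrable_centered_square[of n] integral_centered_square[of n] prob_space
    by (simp add: integral_add)
  finally show ?thesis .
qed

lemma integral_abs_centered_product_le:
  "(\<integral>\<omega>. \<bar>(X m \<omega> - \<mu>) * (X n \<omega> - \<mu>)\<bar> \<partial>M) \<le> 2 * \<sigma> 0"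
proof -
  have "(\<integral>\<omega>. \<bar>(X m \<omega> - \<mu>) * (X n \<omega> - \<mu>)\<bar> \<partial>M)
      \<le> (\<integral>\<omega>. (X m \<omega> - \<mu>)\<^sup>2 + (X n \<omega> - \<mu>)\<^sup>2 \<partial>M)"
    by (rule integral_mono)
      (use integrable_centered_product integrable_centered_square abs_mult_le_sum_squares in auto)
  also have "\<dots> = 2 * \<sigma> 0"
    using integrable_centered_square integral_centered_square by (simp add: integral_add)
  finally show ?thesis .
qed

lemma integral_at_independent_time:
  assumes ind: "indep_var (Pi\<^sub>M UNIV (\<lambda>_. borel)) (\<lambda>\<omega> n. X n \<omega>) SZ Z"
    and \<tau>: "\<tau> \<in> measurable SZ (count_space UNIV)"
  shows "integrable M (\<lambda>\<omega>. X (\<tau> (Z \<omega>)) \<omega>)"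
    and "(\<integral>\<omega>. X (\<tau> (Z \<omega>)) \<omega> \<partial>M) = \<mu>"
  using integral_indep_random_index[OF ind \<tau>, where F = "\<lambda>i x. x i" and K = "1 + \<bar>\<mu>\<bar> + \<sigma> 0"]
    integrable_X integral_abs_X_le
  by (simp_all add: integral_X prob_space)

lemma cov_at_independent_times:
  assumes ind: "indep_var (Pi\<^sub>M UNIV (\<lambda>_. borel)) (\<lambda>\<omega> n. X n \<omega>) SZ Z"
    and \<tau>\<^sub>1[measurable]: "\<tau>\<^sub>1 \<in> measurable SZ (count_space UNIV)"
    and \<tau>\<^sub>2[measurable]: "\<tau>\<^sub>2 \<in> measurable SZ (count_space UNIV)"
  shows "cov M (\<lambda>\<omega>. X (\<tau>\<^sub>1 (Z \<omega>)) \<omega>) (\<lambda>\<omega>. X (\<tau>\<^sub>2 (Z \<omega>)) \<omega>)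
    = (\<integral>\<omega>. cov M (X (\<tau>\<^sub>1 (Z \<omega>))) (X (\<tau>\<^sub>2 (Z \<omega>))) \<partial>M)"
proof -
  have \<tau>: "(\<lambda>z. (\<tau>\<^sub>1 z, \<tau>\<^sub>2 z)) \<in> measurable SZ (count_space UNIV)"
    using measurable_Pair[OF \<tau>\<^sub>1 \<tau>\<^sub>2] by (simp add: pair_measure_countable)
  have "(\<integral>\<omega>. (X (\<tau>\<^sub>1 (Z \<omega>)) \<omega> - \<mu>) * (X (\<tau>\<^sub>2 (Z \<omega>)) \<omega> - \<mu>) \<partial>M)
      = (\<integral>\<omega>. (\<integral>\<omega>'. (X (\<tau>\<^sub>1 (Z \<omega>)) \<omega>' - \<mu>) * (X (\<tau>\<^sub>2 (Z \<omega>)) \<omega>' - \<mu>) \<partial>M) \<partial>M)"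
    using integral_indep_random_index(2)[OF ind \<tau>,
        where F = "\<lambda>(i, j) x. (x i - \<mu>) * (x j - \<mu>)" and K = "2 * \<sigma> 0"]
      integrable_centered_product integral_abs_centered_product_le
    by (simp add: split_beta)
  then show ?thesis
    unfolding cov_def integral_at_independent_time(2)[OF ind \<tau>\<^sub>1]
      integral_at_independent_time(2)[OF ind \<tau>\<^sub>2] integral_X .
qed

lemma cov_at_random_walk:
  fixes \<xi> T :: "nat \<Rightarrow> 'a \<Rightarrow> nat"
  assumes ind: "indep_var
      (Pi\<^sub>M UNIV (\<lambda>_. borel)) (\<lambda>\<omega> n. X n \<omega>) (Pi\<^sub>M UNIV (\<lambda>_. borel)) (\<lambda>\<omega> n. real (\<xi> n \<omega>))"
    and T: "\<And>n \<omega>. T n \<omega> = (\<Sum>i<n. \<xi> i \<omega>)"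
  shows "cov M (\<lambda>\<omega>. X (T n \<omega>) \<omega>) (\<lambda>\<omega>. X (T (n + h) \<omega>) \<omega>)
    = (\<integral>\<omega>. \<sigma> (\<Sum>i\<in>{n..<n+h}. \<xi> i \<omega>) \<partial>M)"
proof -
  \<comment> \<open>The walk is read off the real-valued increment path appearing in the independence hypothesis.\<close>
  define \<tau> where "\<tau> n z = nat \<lfloor>\<Sum>i<n. z i\<rfloor>" for n and z :: "nat \<Rightarrow> real"
  have \<tau>: "\<tau> n \<in> measurable (Pi\<^sub>M UNIV (\<lambda>_. borel)) (count_space UNIV)" for n
    unfolding \<tau>_def by measurable
  have T_eq_\<tau>: "T n \<omega> = \<tau> n (\<lambda>i. real (\<xi> i \<omega>))" for n \<omega>
    by (simp add: \<tau>_def T flip: of_nat_sum)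
  have "T (n + h) \<omega> = T n \<omega> + (\<Sum>i\<in>{n..<n+h}. \<xi> i \<omega>)" for \<omega>
    unfolding T by (simp add: lessThan_atLeast0 sum.atLeastLessThan_concat)
  then show ?thesis
    using cov_at_independent_times[OF ind \<tau> \<tau>, of n "n + h"]
    by (simp add: T_eq_\<tau>[symmetric] cov_X)
qed

end

lemma (in prob_space) AE_sum_ge_1_of_pmf_law:
  fixes \<xi> :: "nat \<Rightarrow> 'a \<Rightarrow> nat"
  assumes [measurable]: "\<And>i. \<xi> i \<in> measurable M (count_space UNIV)"
    and law: "\<And>i. distr M (count_space UNIV) (\<xi> i) = measure_pmf S"
    and S_pos: "0 \<notin> set_pmf S"
    and "finite I" "i \<in> I"
  shows "AE \<omega> in M. 1 \<le> (\<Sum>j\<in>I. \<xi> j \<omega>)"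
proof -
  have "AE k in distr M (count_space UNIV) (\<xi> i). 1 \<le> k"
    unfolding law using S_pos by (auto simp: AE_measure_pmf_iff Suc_le_eq intro!: gr0I)
  then have "AE \<omega> in M. 1 \<le> \<xi> i \<omega>"
    by (subst (asm) AE_distr_iff) auto
  moreover have "\<xi> i \<omega> \<le> (\<Sum>j\<in>I. \<xi> j \<omega>)" for \<omega>
    using assms by (intro member_le_sum) auto
  ultimately show ?thesis
    by (auto intro: order_trans)
qed

lemma (in prob_space) prob_sum_le_power_of_iid:
  fixes \<xi> :: "nat \<Rightarrow> 'a \<Rightarrow> nat"
  assumes ind: "indep_vars (\<lambda>_. count_space UNIV) \<xi> UNIV"
    and law: "\<And>i. distr M (count_space UNIV) (\<xi> i) = measure_pmf S"
    and I: "finite I" "I \<noteq> {}"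
  shows "prob {\<omega>\<in>space M. real (\<Sum>i\<in>I. \<xi> i \<omega>) \<le> x}
    \<le> measure_pmf.prob S {k. real k \<le> x} ^ card I"
proof -
  have [measurable]: "\<And>i. \<xi> i \<in> measurable M (count_space UNIV)"
    using ind unfolding indep_vars_def2 by auto
  define A where "A i = \<xi> i -` {k. real k \<le> x} \<inter> space M" for i
  have "{\<omega>\<in>space M. real (\<Sum>i\<in>I. \<xi> i \<omega>) \<le> x} \<subseteq> (\<Inter>i\<in>I. A i)"
  proof safe
    fix \<omega> i
    assume "\<omega> \<in> space M" "real (\<Sum>i\<in>I. \<xi> i \<omega>) \<le> x" "i \<in> I"
    moreover have "real (\<xi> i \<omega>) \<le> (\<Sum>j\<in>I. real (\<xi> j \<omega>))"
      using I \<open>i \<in> I\<close> by (intro member_le_sum) auto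
    ultimately show "\<omega> \<in> A i"
      unfolding A_def by auto
  qed
  then have "prob {\<omega>\<in>space M. real (\<Sum>i\<in>I. \<xi> i \<omega>) \<le> x} \<le> prob (\<Inter>i\<in>I. A i)"
    using I by (intro finite_measure_mono) (auto simp: A_def)
  also have "\<dots> = (\<Prod>i\<in>I. prob (A i))"
  proof (rule indep_setsD)
    show "indep_sets (\<lambda>i. {\<xi> i -` A \<inter> space M | A. A \<in> sets (count_space UNIV)}) UNIV"
      using ind unfolding indep_vars_def2 by auto
    show "\<forall>i\<in>I. A i \<in> {\<xi> i -` A \<inter> space M | A. A \<in> sets (count_space UNIV)}"
      unfolding A_def by (auto intro!: exI[of _ "{k. real k \<le> x}"])
  qed (use I in auto)
  also have "\<dots> = (\<Prod>i\<in>I. measure_pmf.prob S {k. real k \<le> x})"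
  proof (rule prod.cong[OF refl])
    fix i
    have "prob (A i) = measure (distr M (count_space UNIV) (\<xi> i)) {k. real k \<le> x}"
      unfolding A_def by (rule measure_distr[symmetric]) auto
    then show "prob (A i) = measure_pmf.prob S {k. real k \<le> x}"
      by (simp add: law)
  qed
  finally show ?thesis by simp
qed

lemma (in prob_space) prob_sum_le_exp_of_iid:
  fixes \<xi> :: "nat \<Rightarrow> 'a \<Rightarrow> nat"
  assumes ind: "indep_vars (\<lambda>_. count_space UNIV) \<xi> UNIV"
    and law: "\<And>i. distr M (count_space UNIV) (\<xi> i) = measure_pmf S"
    and I: "finite I" "I \<noteq> {}"
  shows "prob {\<omega>\<in>space M. real (\<Sum>i\<in>I. \<xi> i \<omega>) \<le> x}
    \<le> exp (-(real (card I) * measure_pmf.prob S {k. x < real k}))"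
proof -
  let ?q = "measure_pmf.prob S {k. x < real k}"
  have "measure_pmf.prob S {k. real k \<le> x} = 1 - ?q"
    using measure_pmf.prob_compl[of "{k. x < real k}" S]
    by (simp add: Compl_eq_Diff_UNIV[symmetric] Compl_eq not_less)
  then have "prob {\<omega>\<in>space M. real (\<Sum>i\<in>I. \<xi> i \<omega>) \<le> x} \<le> (1 - ?q) ^ card I"
    using prob_sum_le_power_of_iid[OF ind law I, of x] by simp
  also have "\<dots> \<le> exp (- ?q) ^ card I"
    using exp_ge_add_one_self[of "- ?q"] by (intro power_mono) auto
  also have "\<dots> = exp (-(real (card I) * ?q))"
    by (simp flip: exp_of_nat_mult)
  finally show ?thesis .
qed

lemma lower_bound_of_Liminf_powr:
  fixes q :: "real \<Rightarrow> real" and \<beta> :: real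
  assumes \<beta>: "0 < \<beta>"
    and antimono_q: "\<And>x y. x \<le> y \<Longrightarrow> q y \<le> q x"
    and Liminf_pos: "Liminf at_top (\<lambda>x. ereal (x powr \<beta> * q x)) > 0"
  shows "\<exists>\<kappa>>0. \<forall>x\<ge>1. \<kappa> * x powr (-\<beta>) \<le> q x"
proof -
  obtain y where y: "0 < ereal y" "ereal y < Liminf at_top (\<lambda>x. ereal (x powr \<beta> * q x))"
    using ereal_dense2[OF Liminf_pos] by blast
  then have "0 < y" by simp
  have "eventually (\<lambda>x. ereal y < ereal (x powr \<beta> * q x)) at_top"
    using y(2) by (rule less_LiminfD)
  then obtain N where N: "\<And>x. N \<le> x \<Longrightarrow> y < x powr \<beta> * q x"
    by (auto simp: eventually_at_top_linorder)
  define x\<^sub>0 where "x\<^sub>0 = max N 1"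
  have y_le_q: "y * x powr (-\<beta>) \<le> q x" if "x\<^sub>0 \<le> x" for x
  proof -
    have "y * x powr (-\<beta>) \<le> (x powr \<beta> * q x) * x powr (-\<beta>)"
      using N[of x] that by (intro mult_right_mono) (auto simp: x\<^sub>0_def)
    also have "\<dots> = q x"
      using that by (simp add: x\<^sub>0_def powr_minus field_simps)
    finally show ?thesis .
  qed
  have "y * x\<^sub>0 powr (-\<beta>) * x powr (-\<beta>) \<le> q x" if "1 \<le> x" for x
  proof (cases "x\<^sub>0 \<le> x")
    case True
    have "x\<^sub>0 powr (-\<beta>) \<le> 1"
      using \<beta> by (intro powr_neg_le_1) (auto simp: x\<^sub>0_def)
    then have "y * x\<^sub>0 powr (-\<beta>) * x powr (-\<beta>) \<le> y * x powr (-\<beta>)"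
      using \<open>0 < y\<close> by (simp add: mult_left_le_one_le mult_le_cancel_right1)
    also have "\<dots> \<le> q x" by (rule y_le_q[OF True])
    finally show ?thesis .
  next
    case False
    have "x powr (-\<beta>) \<le> 1"
      using that \<beta> by (intro powr_neg_le_1) auto
    then have "y * x\<^sub>0 powr (-\<beta>) * x powr (-\<beta>) \<le> y * x\<^sub>0 powr (-\<beta>)"
      using \<open>0 < y\<close> by (intro mult_left_le) auto
    also have "\<dots> \<le> q x\<^sub>0" by (rule y_le_q) simp
    also have "\<dots> \<le> q x" using False by (intro antimono_q) simp
    finally show ?thesis .
  qed
  moreover have "0 < y * x\<^sub>0 powr (-\<beta>)"
    using \<open>0 < y\<close> by (simp add: x\<^sub>0_def)
  ultimately show ?thesis by blast
qed

lemma (in prob_space) integral_powr_neg_le_dyadic: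
  fixes D :: "'a \<Rightarrow> real"
  assumes [measurable]: "D \<in> borel_measurable M"
    and D_ge_1: "AE \<omega> in M. 1 \<le> D \<omega>"
    and a: "0 < a" "a < 2^K" and \<alpha>: "0 < \<alpha>"
  shows "(\<integral>\<omega>. D \<omega> powr (-\<alpha>) \<partial>M)
    \<le> a powr (-\<alpha>) + (\<Sum>k<K. (a / 2^(k+1)) powr (-\<alpha>) * prob {\<omega>\<in>space M. D \<omega> \<le> a / 2^k})"
proof -
  define E where "E k = {\<omega>\<in>space M. D \<omega> \<le> a / 2^k}" for k
  have [measurable]: "E k \<in> events" for k
    unfolding E_def by measurable
  define R where "R \<omega> = a powr (-\<alpha>) + (\<Sum>k<K. (a / 2^(k+1)) powr (-\<alpha>) * indicator (E k) \<omega>)" for \<omega>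
  have integrable_E: "integrable M (indicator (E k) :: 'a \<Rightarrow> real)" for k
    by (intro integrable_real_indicator) (auto simp: emeasure_eq_measure)
  have integrable_sum_E: "integrable M (\<lambda>\<omega>. \<Sum>k<K. (a / 2^(k+1)) powr (-\<alpha>) * indicator (E k) \<omega>)"
    by (intro Bochner_Integration.integrable_sum integrable_mult_right integrable_E)
  have integrable_R: "integrable M R"
    unfolding R_def by (intro Bochner_Integration.integrable_add integrable_const integrable_sum_E)
  have integrable_D: "integrable M (\<lambda>\<omega>. D \<omega> powr (-\<alpha>))"
    by (rule integrable_const_bound[where B = 1])
      (use D_ge_1 \<alpha> in \<open>auto elim!: eventually_mono intro: powr_neg_le_1\<close>)
  have "(\<integral>\<omega>. D \<omega> powr (-\<alpha>) \<partial>M) \<le> (\<integral>\<omega>. R \<omega> \<partial>M)"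
  proof (rule integral_mono_AE[OF integrable_D integrable_R])
    show "AE \<omega> in M. D \<omega> powr (-\<alpha>) \<le> R \<omega>"
      using D_ge_1 AE_space
    proof eventually_elim
      case (elim \<omega>)
      have "a < 1 * 2^K" using a by simp
      also have "\<dots> \<le> D \<omega> * 2^K" using elim(1) by (intro mult_right_mono) auto
      finally have "a / 2^K < D \<omega>" by (simp add: divide_less_eq)
      then have "D \<omega> powr (-\<alpha>)
          \<le> a powr (-\<alpha>) + (\<Sum>k<K. (a / 2^(k+1)) powr (-\<alpha>) * (if D \<omega> \<le> a / 2^k then 1 else 0))"
        by (intro powr_neg_le_dyadic_sum a \<alpha>)
      also have "\<dots> = R \<omega>"
        unfolding R_def E_def using elim(2)
        by (intro arg_cong2[where f = "(+)"] refl sum.cong) (simp_all add: indicator_def)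
      finally show ?case .
    qed
  qed
  also have "(\<integral>\<omega>. R \<omega> \<partial>M)
      = a powr (-\<alpha>) + (\<Sum>k<K. (a / 2^(k+1)) powr (-\<alpha>) * prob {\<omega>\<in>space M. D \<omega> \<le> a / 2^k})"
  proof -
    have "(\<integral>\<omega>. R \<omega> \<partial>M)
        = a powr (-\<alpha>) + (\<integral>\<omega>. (\<Sum>k<K. (a / 2^(k+1)) powr (-\<alpha>) * indicator (E k) \<omega>) \<partial>M)"
      unfolding R_def
      by (subst Bochner_Integration.integral_add[OF integrable_const integrable_sum_E])
        (simp add: prob_space)
    also have "\<dots> = a powr (-\<alpha>) + (\<Sum>k<K. (a / 2^(k+1)) powr (-\<alpha>) * prob (E k))"
      by (subst Bochner_Integration.integral_sum) (auto intro!: integrable_mult_right integrable_E)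
    finally show ?thesis by (simp add: E_def)
  qed
  finally show ?thesis .
qed

lemma powr_dyadic_rescale:
  fixes t \<alpha> \<beta> :: real
  assumes t: "0 < t" and \<beta>: "0 < \<beta>"
  shows "(t powr (1/\<beta>) / 2^(k+1)) powr (-\<alpha>) = t powr (-\<alpha>/\<beta>) * 2 powr ((real k + 1) * \<alpha>)"
    and "t * (t powr (1/\<beta>) / 2^k) powr (-\<beta>) = 2 powr (real k * \<beta>)"
proof -
  have two_pow: "((2::real)^n) powr z = 2 powr (real n * z)" for n z
    by (simp add: powr_realpow[symmetric] powr_powr)
  have "(t powr (1/\<beta>) / 2^(k+1)) powr (-\<alpha>) = (t powr (1/\<beta>)) powr (-\<alpha>) * ((2::real)^(k+1)) powr \<alpha>"
    by (simp add: powr_divide powr_minus divide_simps)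
  also have "\<dots> = t powr (-\<alpha>/\<beta>) * 2 powr ((real k + 1) * \<alpha>)"
    using two_pow[of "k+1" \<alpha>] by (simp add: powr_powr add.commute)
  finally show "(t powr (1/\<beta>) / 2^(k+1)) powr (-\<alpha>) = t powr (-\<alpha>/\<beta>) * 2 powr ((real k + 1) * \<alpha>)" .
  have "t * (t powr (1/\<beta>) / 2^k) powr (-\<beta>) = t * ((t powr (1/\<beta>)) powr (-\<beta>) * ((2::real)^k) powr \<beta>)"
    by (simp add: powr_divide powr_minus divide_simps)
  also have "\<dots> = 2 powr (real k * \<beta>)"
    using t \<beta> by (simp add: powr_powr powr_minus_divide two_pow)
  finally show "t * (t powr (1/\<beta>) / 2^k) powr (-\<beta>) = 2 powr (real k * \<beta>)" .
qed

lemma (in prob_space) integral_powr_neg_le_of_lower_tail: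
  fixes D :: "'a \<Rightarrow> real" and t \<kappa> \<alpha> \<beta> :: real
  assumes [measurable]: "D \<in> borel_measurable M"
    and D_ge_1: "AE \<omega> in M. 1 \<le> D \<omega>"
    and t: "0 < t" and \<alpha>: "0 < \<alpha>" and \<beta>: "0 < \<beta>" and \<kappa>: "0 < \<kappa>"
    and lower_tail: "\<And>x. 0 < x \<Longrightarrow> prob {\<omega>\<in>space M. D \<omega> \<le> x} \<le> exp (-(t * \<kappa> * x powr (-\<beta>)))"
  shows "(\<integral>\<omega>. D \<omega> powr (-\<alpha>) \<partial>M)
    \<le> (1 + (\<Sum>k. 2 powr ((real k + 1) * \<alpha>) * exp (-(\<kappa> * 2 powr (real k * \<beta>)))))
      * t powr (-\<alpha>/\<beta>)"
proof -
  define a where "a = t powr (1/\<beta>)"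
  have "0 < a" using t by (simp add: a_def)
  obtain K where K: "a < 2^K"
    using real_arch_pow[of 2 a] by auto
  define f where "f k = 2 powr ((real k + 1) * \<alpha>) * exp (-(\<kappa> * 2 powr (real k * \<beta>)))" for k
  have a_powr: "a powr (-\<alpha>) = t powr (-\<alpha>/\<beta>)"
    using t by (simp add: a_def powr_powr)
  have shell_term:
    "(a / 2^(k+1)) powr (-\<alpha>) * exp (-(t * \<kappa> * (a / 2^k) powr (-\<beta>))) = t powr (-\<alpha>/\<beta>) * f k" for k
  proof -
    have "t * \<kappa> * (a / 2^k) powr (-\<beta>) = \<kappa> * (t * (a / 2^k) powr (-\<beta>))"
      by (simp add: mult_ac)
    then show ?thesis
      using powr_dyadic_rescale(1)[OF t \<beta>, of k \<alpha>] powr_dyadic_rescale(2)[OF t \<beta>, of k]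
      by (simp add: a_def f_def mult.assoc)
  qed
  have "(\<integral>\<omega>. D \<omega> powr (-\<alpha>) \<partial>M)
      \<le> a powr (-\<alpha>) + (\<Sum>k<K. (a / 2^(k+1)) powr (-\<alpha>) * prob {\<omega>\<in>space M. D \<omega> \<le> a / 2^k})"
    by (rule integral_powr_neg_le_dyadic[OF _ D_ge_1 \<open>0 < a\<close> K \<alpha>]) simp
  also have "\<dots> \<le> a powr (-\<alpha>) + (\<Sum>k<K. (a / 2^(k+1)) powr (-\<alpha>) * exp (-(t * \<kappa> * (a / 2^k) powr (-\<beta>))))"
    using \<open>0 < a\<close> by (intro add_left_mono sum_mono mult_left_mono lower_tail) auto
  also have "\<dots> = t powr (-\<alpha>/\<beta>) * (1 + (\<Sum>k<K. f k))"
    unfolding shell_term by (simp add: a_powr sum_distrib_left distrib_left)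
  also have "\<dots> \<le> t powr (-\<alpha>/\<beta>) * (1 + (\<Sum>k. f k))"
    using sum_le_suminf[OF summable_dyadic_powr_exp[OF \<kappa> \<beta>, of \<alpha>, folded f_def], of "{..<K}"]
    by (intro mult_left_mono add_left_mono) (auto simp: f_def)
  finally show ?thesis
    by (simp add: f_def mult.commute)
qed

lemma (in prob_space) integral_sum_iid_powr_neg_le:
  fixes \<xi> :: "nat \<Rightarrow> 'a \<Rightarrow> nat" and S :: "nat pmf" and \<alpha> \<beta> :: real
  assumes ind: "indep_vars (\<lambda>_. count_space UNIV) \<xi> UNIV"
    and law: "\<And>i. distr M (count_space UNIV) (\<xi> i) = measure_pmf S"
    and S_pos: "0 \<notin> set_pmf S" and \<alpha>: "0 < \<alpha>" and \<beta>: "0 < \<beta>"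
    and tail: "Liminf at_top (\<lambda>x. ereal (x powr \<beta> * measure_pmf.prob S {k. x < real k})) > 0"
  shows "\<exists>B. \<forall>I. finite I \<longrightarrow> I \<noteq> {} \<longrightarrow>
    (\<integral>\<omega>. real (\<Sum>i\<in>I. \<xi> i \<omega>) powr (-\<alpha>) \<partial>M) \<le> B * real (card I) powr (-\<alpha>/\<beta>)"
proof -
  have \<xi>_meas[measurable]: "\<And>i. \<xi> i \<in> measurable M (count_space UNIV)"
    using ind unfolding indep_vars_def2 by auto
  define q where "q x = measure_pmf.prob S {k. x < real k}" for x
  have "q y \<le> q x" if "x \<le> y" for x y
    unfolding q_def using that by (intro measure_pmf.finite_measure_mono) auto
  then obtain \<kappa> where \<kappa>: "0 < \<kappa>" "\<And>x. 1 \<le> x \<Longrightarrow> \<kappa> * x powr (-\<beta>) \<le> q x"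
    using lower_bound_of_Liminf_powr[OF \<beta> _ tail[folded q_def]] by blast
  define B where "B = 1 + (\<Sum>k. 2 powr ((real k + 1) * \<alpha>) * exp (-(\<kappa> * 2 powr (real k * \<beta>))))"
  have "(\<integral>\<omega>. real (\<Sum>i\<in>I. \<xi> i \<omega>) powr (-\<alpha>) \<partial>M) \<le> B * real (card I) powr (-\<alpha>/\<beta>)"
    if I: "finite I" "I \<noteq> {}" for I
    unfolding B_def
  proof (rule integral_powr_neg_le_of_lower_tail[OF _ _ _ \<alpha> \<beta> \<kappa>(1)])
    obtain i where "i \<in> I" using I by blast
    have "AE \<omega> in M. 1 \<le> (\<Sum>i\<in>I. \<xi> i \<omega>)"
      by (rule AE_sum_ge_1_of_pmf_law[OF \<xi>_meas law S_pos I(1) \<open>i \<in> I\<close>])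
    then show D_ge_1: "AE \<omega> in M. 1 \<le> real (\<Sum>i\<in>I. \<xi> i \<omega>)"
      by (rule eventually_mono) (metis of_nat_1 of_nat_le_iff)
    show "0 < real (card I)"
      using I by (simp add: card_gt_0_iff)
    show "prob {\<omega>\<in>space M. real (\<Sum>i\<in>I. \<xi> i \<omega>) \<le> x}
        \<le> exp (-(real (card I) * \<kappa> * x powr (-\<beta>)))" for x
    proof (cases "1 \<le> x")
      case True
      have "prob {\<omega>\<in>space M. real (\<Sum>i\<in>I. \<xi> i \<omega>) \<le> x} \<le> exp (-(real (card I) * q x))"
        unfolding q_def by (rule prob_sum_le_exp_of_iid[OF ind law I])
      also have "\<dots> \<le> exp (-(real (card I) * \<kappa> * x powr (-\<beta>)))"
        using \<kappa>(2)[OF True] by (simp add: mult.assoc mult_left_mono)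
      finally show ?thesis .
    next
      case False
      have "prob {\<omega>\<in>space M. real (\<Sum>i\<in>I. \<xi> i \<omega>) \<le> x} = 0"
        using D_ge_1 False by (intro prob_eq_0_AE) auto
      then show ?thesis by simp
    qed
  qed measurable
  then show ?thesis by blast
qed

lemma (in prob_space) abs_integral_le_of_decay:
  fixes f :: "nat \<Rightarrow> real" and D :: "'a \<Rightarrow> nat"
  assumes [measurable]: "D \<in> measurable M (count_space UNIV)"
    and D_ge_1: "AE \<omega> in M. 1 \<le> D \<omega>"
    and \<alpha>: "0 \<le> \<alpha>"
    and decay: "\<And>h. 1 \<le> h \<Longrightarrow> \<bar>f h\<bar> \<le> c * real h powr (-\<alpha>)"
  shows "\<bar>\<integral>\<omega>. f (D \<omega>) \<partial>M\<bar> \<le> c * (\<integral>\<omega>. real (D \<omega>) powr (-\<alpha>) \<partial>M)"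
proof -
  have "0 \<le> c"
    using decay[of 1] by simp
  have f_le: "AE \<omega> in M. \<bar>f (D \<omega>)\<bar> \<le> c * real (D \<omega>) powr (-\<alpha>)"
    using D_ge_1 by eventually_elim (rule decay)
  have powr_le_1: "AE \<omega> in M. real (D \<omega>) powr (-\<alpha>) \<le> 1"
    using D_ge_1 by eventually_elim (use \<alpha> in \<open>auto intro: powr_neg_le_1\<close>)
  have integrable_powr: "integrable M (\<lambda>\<omega>. real (D \<omega>) powr (-\<alpha>))"
    by (rule integrable_const_bound[where B = 1]) (use powr_le_1 in auto)
  have integrable_f: "integrable M (\<lambda>\<omega>. f (D \<omega>))"
  proof (rule integrable_const_bound[where B = c])
    show "AE \<omega> in M. norm (f (D \<omega>)) \<le> c"
      using f_le powr_le_1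
    proof eventually_elim
      case (elim \<omega>)
      have "c * real (D \<omega>) powr (-\<alpha>) \<le> c"
        using elim(2) \<open>0 \<le> c\<close> by (rule mult_left_le)
      with elim(1) show ?case by simp
    qed
    show "(\<lambda>\<omega>. f (D \<omega>)) \<in> borel_measurable M"
      by (rule measurable_compose_countable[where f = "\<lambda>i \<omega>. f i"]) auto
  qed
  have "\<bar>\<integral>\<omega>. f (D \<omega>) \<partial>M\<bar> \<le> (\<integral>\<omega>. \<bar>f (D \<omega>)\<bar> \<partial>M)"
    by (rule integral_abs_bound)
  also have "\<dots> \<le> (\<integral>\<omega>. c * real (D \<omega>) powr (-\<alpha>) \<partial>M)"
    by (rule integral_mono_AE) (use integrable_f integrable_powr f_le in auto)
  finally show ?thesis by simp
qed

theorem proposition3p2: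
  fixes M :: "'a measure"
    and X :: "nat \<Rightarrow> 'a \<Rightarrow> real"
    and \<sigma>X :: "nat \<Rightarrow> real"
    and \<xi> :: "nat \<Rightarrow> 'a \<Rightarrow> nat"
    and T :: "nat \<Rightarrow> 'a \<Rightarrow> nat"
    and S :: "nat pmf"
    and c \<alpha> \<beta> :: real
  assumes P: "prob_space M"
    and X_meas: "\<And>n. X n \<in> borel_measurable M"
    and X_L2: "\<And>n. integrable M (\<lambda>\<omega>. (X n \<omega>)\<^sup>2)"
    and X_mean: "\<And>n. (\<integral>\<omega>. X n \<omega> \<partial>M) = (\<integral>\<omega>. X 0 \<omega> \<partial>M)"
    and X_cov: "\<And>m h. cov M (X m) (X (m + h)) = \<sigma>X h"
    and c_pos: "c > 0" and \<alpha>: "0 < \<alpha>" "\<alpha> < 1"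
    and decay: "\<And>h. h \<ge> 1 \<Longrightarrow> \<bar>\<sigma>X h\<bar> \<le> c * real h powr (- \<alpha>)"
    and S_pos: "0 \<notin> set_pmf S"
    and \<xi>_iid: "prob_space.indep_vars M (\<lambda>_. count_space UNIV) \<xi> UNIV"
    and \<xi>_law: "\<And>i. distr M (count_space UNIV) (\<xi> i) = measure_pmf S"
    and T_def: "\<And>n \<omega>. T n \<omega> = (\<Sum>i<n. \<xi> i \<omega>)"
    and indep: "prob_space.indep_var M
        (Pi\<^sub>M UNIV (\<lambda>_. borel)) (\<lambda>\<omega> n. X n \<omega>)
        (Pi\<^sub>M UNIV (\<lambda>_. borel)) (\<lambda>\<omega> n. real (\<xi> n \<omega>))"
    and \<beta>: "0 < \<beta>" "\<beta> < 1"
    and tail: "Liminf at_top (\<lambda>x::real. ereal (x powr \<beta> * measure M {\<omega>\<in>space M. real (T 1 \<omega>) > x})) > 0"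
  shows "\<exists>C. \<forall>n h. h \<ge> 1 \<longrightarrow>
           \<bar>cov M (\<lambda>\<omega>. X (T n \<omega>) \<omega>) (\<lambda>\<omega>. X (T (n + h) \<omega>) \<omega>)\<bar> \<le> C * real h powr (- \<alpha> / \<beta>)"
proof -
  interpret prob_space M by (rule P)
  interpret X: second_order_stationary M X "\<integral>\<omega>. X 0 \<omega> \<partial>M" \<sigma>X
    by unfold_locales (use X_meas X_L2 X_mean X_cov in auto)
  have \<xi>_meas[measurable]: "\<And>i. \<xi> i \<in> measurable M (count_space UNIV)"
    using \<xi>_iid unfolding indep_vars_def2 by auto
  have "measure M {\<omega>\<in>space M. real (T 1 \<omega>) > x} = measure_pmf.prob S {k. x < real k}" for x
    using measure_distr[of "\<xi> 0" M "count_space UNIV" "{k. x < real k}"]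
    by (simp add: \<xi>_law T_def vimage_def Int_def conj_commute)
  then obtain B where B: "\<And>I. finite I \<Longrightarrow> I \<noteq> {} \<Longrightarrow>
      (\<integral>\<omega>. real (\<Sum>i\<in>I. \<xi> i \<omega>) powr (-\<alpha>) \<partial>M) \<le> B * real (card I) powr (-\<alpha>/\<beta>)"
    using integral_sum_iid_powr_neg_le[OF \<xi>_iid \<xi>_law S_pos \<alpha>(1) \<beta>(1)] tail by auto
  have "\<bar>cov M (\<lambda>\<omega>. X (T n \<omega>) \<omega>) (\<lambda>\<omega>. X (T (n + h) \<omega>) \<omega>)\<bar> \<le> (c * B) * real h powr (- \<alpha> / \<beta>)"
    if "1 \<le> h" for n h
  proof -
    have "\<bar>cov M (\<lambda>\<omega>. X (T n \<omega>) \<omega>) (\<lambda>\<omega>. X (T (n + h) \<omega>) \<omega>)\<bar>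
        \<le> c * (\<integral>\<omega>. real (\<Sum>i\<in>{n..<n+h}. \<xi> i \<omega>) powr (-\<alpha>) \<partial>M)"
      unfolding X.cov_at_random_walk[OF indep T_def]
      using AE_sum_ge_1_of_pmf_law[OF \<xi>_meas \<xi>_law S_pos, of "{n..<n+h}" n] \<open>1 \<le> h\<close> \<alpha>(1)
      by (intro abs_integral_le_of_decay decay) auto
    also have "\<dots> \<le> c * (B * real h powr (-\<alpha>/\<beta>))"
      using B[of "{n..<n+h}"] \<open>1 \<le> h\<close> c_pos by (intro mult_left_mono) auto
    finally show ?thesis by (simp add: mult.assoc)
  qed
  then show ?thesis by blast
qed

end
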